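(* Let $r\ge 2$. Then $\mathscr{Z}^{\rm TAR}(K_{1,r})\cong K_{1,r}\,\square\,K_2$. Furthermore, $\overline{\operatorname{Z}}(K_{1,r})=\operatorname{Z}(K_{1,r})=r-1$ and $z_0(K_{1,r})=\underline{z_0}(K_{1,r})=r$.
   Context: Zero forcing on a graph $G$: starting with a set $S$ of blue vertices (others white), a blue vertex $v$ may change a white vertex $w$ to blue if $w$ is the only white neighbor of $v$. $S$ is a zero forcing set if repeated application colors all of $V(G)$ blue. $\operatorname{Z}(G)$ is the minimum size of a zero forcing set, $\overline{\operatorname{Z}}(G)$ the maximum size of a minimal (under inclusion) zero forcing set. $\mathscr{Z}^{\rm TAR}(G)$ has vertices the zero forcing sets of $G$, two adjacent iff their symmetric difference has size 1; $\mathscr{Z}^{\rm TAR}_k(G)$ is its subgraph induced by zero forcing sets of size at most $k$. $\underline{z_0}(G)$ is the least $k$ with $\mathscr{Z}^{\rm TAR}_k(G)$ connected; $z_0(G)$ is the least $k$ such that $\mathscr{Z}^{\rm TAR}_i(G)$ is connected for every $i=k,\dots,|V(G)|$. $K_{1,r}$ is the star with $r$ leaves; $\square$ denotes the Cartesian product of graphs. *)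

theory Defs
  imports Main
begin

text \<open>A (finite simple) graph is given by a vertex set and a symmetric irreflexive
adjacency relation.\<close>
type_synonym 'a graph = "'a set \<times> ('a \<Rightarrow> 'a \<Rightarrow> bool)"

definition verts :: "'a graph \<Rightarrow> 'a set" where "verts G = fst G"
definition adj :: "'a graph \<Rightarrow> 'a \<Rightarrow> 'a \<Rightarrow> bool" where "adj G = snd G"

text \<open>Final set of blue vertices: least set containing S and closed under the
colour change rule (a blue vertex v all of whose neighbours except w are blue
forces w).\<close>
inductive_set zf_closure :: "'a graph \<Rightarrow> 'a set \<Rightarrow> 'a set" for G S where
  base: "x \<in> S \<Longrightarrow> x \<in> zf_closure G S"
| force: "v \<in> zf_closure G S \<Longrightarrow> v \<in> verts G \<Longrightarrow> w \<in> verts G \<Longrightarrow> adj G v w \<Longrightarrow>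
          (\<forall>u\<in>verts G. adj G v u \<and> u \<noteq> w \<longrightarrow> u \<in> zf_closure G S) \<Longrightarrow>
          w \<in> zf_closure G S"

definition is_zfs :: "'a graph \<Rightarrow> 'a set \<Rightarrow> bool" where
  "is_zfs G S \<longleftrightarrow> S \<subseteq> verts G \<and> verts G \<subseteq> zf_closure G S"

definition minimal_zfs :: "'a graph \<Rightarrow> 'a set \<Rightarrow> bool" where
  "minimal_zfs G S \<longleftrightarrow> is_zfs G S \<and> (\<forall>T. T \<subset> S \<longrightarrow> \<not> is_zfs G T)"

definition Z :: "'a graph \<Rightarrow> nat" where
  "Z G = Min {card S | S. is_zfs G S}"

definition Zbar :: "'a graph \<Rightarrow> nat" where
  "Zbar G = Max {card S | S. minimal_zfs G S}"

definition symdiff :: "'a set \<Rightarrow> 'a set \<Rightarrow> 'a set" where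
  "symdiff S T = (S - T) \<union> (T - S)"

definition TAR :: "'a graph \<Rightarrow> 'a set graph" where
  "TAR G = ({S. is_zfs G S}, (\<lambda>S T. card (symdiff S T) = 1))"

definition TAR_k :: "'a graph \<Rightarrow> nat \<Rightarrow> 'a set graph" where
  "TAR_k G k = ({S. is_zfs G S \<and> card S \<le> k}, (\<lambda>S T. card (symdiff S T) = 1))"

text \<open>Connectedness; the null graph is not connected.\<close>
definition connected_graph :: "'a graph \<Rightarrow> bool" where
  "connected_graph G \<longleftrightarrow> verts G \<noteq> {} \<and>
     (\<forall>x\<in>verts G. \<forall>y\<in>verts G.
        (\<lambda>a b. a \<in> verts G \<and> b \<in> verts G \<and> adj G a b)\<^sup>*\<^sup>* x y)"

definition z0_under :: "'a graph \<Rightarrow> nat" where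
  "z0_under G = (LEAST k. connected_graph (TAR_k G k))"

definition z0 :: "'a graph \<Rightarrow> nat" where
  "z0 G = (LEAST k. \<forall>i. k \<le> i \<and> i \<le> card (verts G) \<longrightarrow> connected_graph (TAR_k G i))"

definition graph_iso :: "'a graph \<Rightarrow> 'b graph \<Rightarrow> bool" where
  "graph_iso G H \<longleftrightarrow> (\<exists>f. bij_betw f (verts G) (verts H) \<and>
     (\<forall>x\<in>verts G. \<forall>y\<in>verts G. adj G x y \<longleftrightarrow> adj H (f x) (f y)))"

definition star :: "nat \<Rightarrow> nat graph" where
  "star r = ({0..r}, (\<lambda>x y. (x = 0 \<and> y \<noteq> 0) \<or> (y = 0 \<and> x \<noteq> 0)))"

definition K2 :: "nat graph" where
  "K2 = ({0, 1}, (\<lambda>x y. x \<noteq> y))"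

definition cart_prod :: "'a graph \<Rightarrow> 'b graph \<Rightarrow> ('a \<times> 'b) graph" where
  "cart_prod G H = (verts G \<times> verts H,
     (\<lambda>(a, b) (c, d). (a = c \<and> adj H b d) \<or> (b = d \<and> adj G a c)))"

end

(*
  In K_{1,r} a white leaf can only be forced by the centre, and the centre forces only when
  exactly one of its neighbours is white. So, for r >= 2, the zero forcing sets are exactly the
  sets of vertices missing at most one leaf: a blue leaf forces the centre, which then forces
  the missing leaf. Coding such a set by its missing leaf (or by the centre if no leaf is
  missing) together with the colour of the centre identifies it with a vertex of
  K_{1,r} \<box> K_2, and two such sets differ in a single vertex exactly when their codes are
  adjacent. The sets have r - 1, r or r + 1 elements; the minimal ones are those with r - 1
  elements and lie pairwise at distance 2, so TAR_k is edgeless (or empty) for k < r, while for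
  k >= r every set is joined to the set of all leaves.
*)

theory Submission
  imports Defs
begin

lemma verts_TAR [simp]: "verts (TAR G) = {S. is_zfs G S}"
  by (simp add: TAR_def verts_def)

lemma adj_TAR [simp]: "adj (TAR G) S T \<longleftrightarrow> card (symdiff S T) = 1"
  by (simp add: TAR_def adj_def)

lemma verts_TAR_k [simp]: "verts (TAR_k G k) = {S. is_zfs G S \<and> card S \<le> k}"
  by (simp add: TAR_k_def verts_def)

lemma adj_TAR_k [simp]: "adj (TAR_k G k) S T \<longleftrightarrow> card (symdiff S T) = 1"
  by (simp add: TAR_k_def adj_def)

lemma graph_isoI_inverse:
  assumes "bij_betw h (verts H) (verts G)"
    and "\<And>x y. x \<in> verts H \<Longrightarrow> y \<in> verts H \<Longrightarrow> adj G (h x) (h y) \<longleftrightarrow> adj H x y"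
  shows "graph_iso G H"
  unfolding graph_iso_def
proof (intro exI conjI ballI)
  let ?f = "the_inv_into (verts H) h"
  show "bij_betw ?f (verts G) (verts H)"
    using assms(1) by (rule bij_betw_the_inv_into)
  fix x y assume "x \<in> verts G" "y \<in> verts G"
  then have "?f x \<in> verts H" "?f y \<in> verts H" "h (?f x) = x" "h (?f y) = y"
    using assms(1) bij_betw_apply[OF bij_betw_the_inv_into[OF assms(1)]]
    by (auto intro: f_the_inv_into_f_bij_betw)
  then show "adj G x y \<longleftrightarrow> adj H (?f x) (?f y)"
    using assms(2) by metis
qed

lemma connected_graphI_hub:
  assumes "v \<in> verts G"
    and "\<And>x y. x \<in> verts G \<Longrightarrow> y \<in> verts G \<Longrightarrow> adj G x y \<Longrightarrow> adj G y x"
    and "\<And>x. x \<in> verts G \<Longrightarrow> (\<lambda>a b. a \<in> verts G \<and> b \<in> verts G \<and> adj G a b)\<^sup>*\<^sup>* x v"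
  shows "connected_graph G"
proof -
  let ?R = "\<lambda>a b. a \<in> verts G \<and> b \<in> verts G \<and> adj G a b"
  have sym: "?R\<^sup>*\<^sup>* x y \<Longrightarrow> ?R\<^sup>*\<^sup>* y x" for x y
    using assms(2) by (metis (no_types, lifting) symp_rtranclp sympD sympI)
  show ?thesis
    unfolding connected_graph_def
    using assms(1,3) sym by (blast intro: rtranclp_trans)
qed

lemma not_connected_graphI_no_edges:
  assumes "x \<in> verts G" "y \<in> verts G" "x \<noteq> y"
    and "\<And>a b. a \<in> verts G \<Longrightarrow> b \<in> verts G \<Longrightarrow> \<not> adj G a b"
  shows "\<not> connected_graph G"
proof
  let ?R = "\<lambda>a b. a \<in> verts G \<and> b \<in> verts G \<and> adj G a b"
  assume "connected_graph G"
  then have "?R\<^sup>*\<^sup>* x y"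
    using assms(1,2) by (simp add: connected_graph_def)
  then show False
    using assms(3,4) by (induction rule: rtranclp_induct) auto
qed

lemma Z_eqI:
  assumes "finite (verts G)" "is_zfs G S" "\<And>T. is_zfs G T \<Longrightarrow> card S \<le> card T"
  shows "Z G = card S"
  unfolding Z_def
proof (rule Min_eqI)
  have "{card T | T. is_zfs G T} \<subseteq> {..card (verts G)}"
    using assms(1) by (auto simp: is_zfs_def intro: card_mono)
  then show "finite {card T | T. is_zfs G T}"
    using finite_subset by blast
qed (use assms(2,3) in auto)

lemma Zbar_eqI:
  assumes "finite (verts G)" "minimal_zfs G S" "\<And>T. minimal_zfs G T \<Longrightarrow> card T \<le> card S"
  shows "Zbar G = card S"
  unfolding Zbar_def
proof (rule Max_eqI)
  have "{card T | T. minimal_zfs G T} \<subseteq> {..card (verts G)}"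
    using assms(1) by (auto simp: minimal_zfs_def is_zfs_def intro: card_mono)
  then show "finite {card T | T. minimal_zfs G T}"
    using finite_subset by blast
qed (use assms(2,3) in auto)

lemma verts_star [simp]: "verts (star r) = {0..r}"
  by (simp add: verts_def star_def)

lemma adj_star [simp]: "adj (star r) x y \<longleftrightarrow> (x = 0 \<and> y \<noteq> 0) \<or> (y = 0 \<and> x \<noteq> 0)"
  by (simp add: adj_def star_def)

lemma verts_star_times_K2 [simp]: "verts (cart_prod (star r) K2) = {0..r} \<times> {0, 1}"
  by (simp add: cart_prod_def verts_def K2_def star_def)

lemma adj_star_times_K2 [simp]:
  "adj (cart_prod (star r) K2) (a, e) (c, d) \<longleftrightarrow>
     (a = c \<and> e \<noteq> d) \<or> (e = d \<and> ((a = 0 \<and> c \<noteq> 0) \<or> (c = 0 \<and> a \<noteq> 0)))"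
  by (simp add: cart_prod_def adj_def K2_def star_def)

(* star_zfs r (a, e) consists of all leaves except a (no exception if a = 0) and contains the
  centre iff e = 1; it maps the vertices of K_{1,r} \<box> K_2 bijectively onto the zero forcing sets. *)
definition star_zfs :: "nat \<Rightarrow> nat \<times> nat \<Rightarrow> nat set" where
  "star_zfs r p = ({1..r} - {fst p}) \<union> (if snd p = 1 then {0} else {})"

(* A leaf is forced only by the centre, which then sees both white leaves. *)
lemma leaf_notin_zf_closure_star:
  assumes "a \<notin> S" "b \<notin> S" "a \<noteq> b" "a \<in> {1..r}" "b \<in> {1..r}"
  shows "a \<notin> zf_closure (star r) S"
proof -
  have "x \<notin> {a, b}" if "x \<in> zf_closure (star r) S" for x
    using that
  proof (induction rule: zf_closure.induct)
    case (force v w)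
    show ?case
    proof
      assume w: "w \<in> {a, b}"
      then have "v = 0"
        using force.hyps(4) assms(4,5) by auto
      then obtain u where "u \<in> {a, b}" "u \<noteq> w" "u \<in> verts (star r)" "adj (star r) v u"
        using w assms(3-5) by auto
      then show False
        using force.IH(2) by blast
    qed
  qed (use assms in auto)
  then show ?thesis by blast
qed

lemma is_zfs_star_zfs:
  assumes "r \<ge> 2" "a \<le> r" "e \<le> 1"
  shows "is_zfs (star r) (star_zfs r (a, e))"
proof -
  let ?S = "star_zfs r (a, e)"
  define b where "b = (if a = 1 then 2 else (1::nat))"
  have b: "b \<in> ?S" "b \<noteq> 0"
    using assms by (auto simp: star_zfs_def b_def)
  have "b \<in> verts (star r)"
    "\<forall>u\<in>verts (star r). adj (star r) b u \<and> u \<noteq> 0 \<longrightarrow> u \<in> zf_closure (star r) ?S"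
    using b assms(1) by (auto simp: star_zfs_def b_def)
  then have centre: "0 \<in> zf_closure (star r) ?S"
    using zf_closure.force[OF zf_closure.base[OF b(1)], where w = 0] b(2) by simp
  have "x \<in> zf_closure (star r) ?S" if "x \<le> r" for x
  proof (cases "x = 0 \<or> x \<in> ?S")
    case True
    then show ?thesis using centre by (auto intro: zf_closure.base)
  next
    case False
    then have "x = a" "x \<noteq> 0"
      using that by (auto simp: star_zfs_def)
    then have
      "\<forall>u\<in>verts (star r). adj (star r) 0 u \<and> u \<noteq> x \<longrightarrow> u \<in> zf_closure (star r) ?S"
      by (auto simp: star_zfs_def intro: zf_closure.base)
    then show ?thesis
      using zf_closure.force[OF centre, where w = x] that \<open>x \<noteq> 0\<close> by simp
  qed
  then show ?thesis
    using assms by (auto simp: is_zfs_def star_zfs_def)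
qed

lemma is_zfs_starE:
  assumes "is_zfs (star r) S"
  obtains a e where "a \<le> r" "e \<le> 1" "S = star_zfs r (a, e)"
proof -
  have S: "S \<subseteq> {0..r}" "{0..r} \<subseteq> zf_closure (star r) S"
    using assms by (auto simp: is_zfs_def)
  obtain a where a: "a \<le> r" "{1..r} - S = {a} - {0}"
  proof (cases "{1..r} \<subseteq> S")
    case True
    then show ?thesis using that[of 0] by auto
  next
    case False
    then obtain a where a: "a \<in> {1..r} - S" by blast
    have uniq: "b = a" if b: "b \<in> {1..r} - S" for b
    proof (rule ccontr)
      assume "b \<noteq> a"
      moreover have "b \<in> zf_closure (star r) S"
        using S(2) b by auto
      ultimately show False
        using leaf_notin_zf_closure_star[of b S a r] a b by blast
    qed
    have "{1..r} - S = {a}"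
      using a uniq by blast
    moreover have "a \<le> r" "a \<noteq> 0"
      using a by auto
    ultimately have "a \<le> r" "{1..r} - S = {a} - {0}"
      by auto
    then show ?thesis
      by (rule that)
  qed
  define e :: nat where "e = (if 0 \<in> S then 1 else 0)"
  have "S = star_zfs r (a, e)"
  proof (rule set_eqI)
    fix x
    show "x \<in> S \<longleftrightarrow> x \<in> star_zfs r (a, e)"
      using a(2)[THEN eqset_imp_iff, of x] S(1)
      by (cases "x = 0") (auto simp: star_zfs_def e_def)
  qed
  moreover have "e \<le> 1"
    by (simp add: e_def)
  ultimately show ?thesis
    using that a(1) by blast
qed

lemma Collect_is_zfs_star:
  assumes "r \<ge> 2"
  shows "{S. is_zfs (star r) S} = star_zfs r ` verts (cart_prod (star r) K2)"
proof
  show "{S. is_zfs (star r) S} \<subseteq> star_zfs r ` verts (cart_prod (star r) K2)"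
    by (force elim: is_zfs_starE)
  show "star_zfs r ` verts (cart_prod (star r) K2) \<subseteq> {S. is_zfs (star r) S}"
    using is_zfs_star_zfs[OF assms] by auto
qed

lemma card_star_zfs:
  assumes "a \<le> r" "e \<le> 1"
  shows "card (star_zfs r (a, e)) = (if a = 0 then r else r - 1) + e"
proof -
  have "card ({1..r} - {a}) = (if a = 0 then r else r - 1)"
    using assms by auto
  moreover have "star_zfs r (a, e) = (if e = 1 then insert 0 ({1..r} - {a}) else {1..r} - {a})"
    by (auto simp: star_zfs_def)
  ultimately show ?thesis
    using assms by auto
qed

lemma card_symdiff_star_zfs:
  assumes "a \<le> r" "c \<le> r" "e \<le> 1" "d \<le> 1"
  shows "card (symdiff (star_zfs r (a, e)) (star_zfs r (c, d))) =
    (if a = c then 0 else if a = 0 \<or> c = 0 then 1 else 2) + (if e = d then 0 else 1)"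
proof -
  let ?L = "if a = c then {} else {a, c} - {0}" and ?C = "if e = d then {} else {0::nat}"
  have "symdiff (star_zfs r (a, e)) (star_zfs r (c, d)) = ?L \<union> ?C"
    using assms by (auto simp: symdiff_def star_zfs_def)
  moreover have "card (?L \<union> ?C) = card ?L + card ?C"
    by (rule card_Un_disjoint) auto
  moreover have "card ?L = (if a = c then 0 else if a = 0 \<or> c = 0 then 1 else 2)"
    by (auto simp: insert_Diff_if)
  ultimately show ?thesis
    by simp
qed

lemma card_symdiff_star_zfs_eq_1_iff:
  assumes "p \<in> verts (cart_prod (star r) K2)" "q \<in> verts (cart_prod (star r) K2)"
  shows "card (symdiff (star_zfs r p) (star_zfs r q)) = 1 \<longleftrightarrow> adj (cart_prod (star r) K2) p q"
proof -
  obtain a e c d where "p = (a, e)" "q = (c, d)" "a \<le> r" "c \<le> r" "e \<le> 1" "d \<le> 1"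
    using assms by (cases p, cases q) auto
  then show ?thesis
    using card_symdiff_star_zfs[of a r c e d] by auto
qed

lemma inj_on_star_zfs: "inj_on (star_zfs r) (verts (cart_prod (star r) K2))"
proof (rule inj_onI)
  fix p q
  assume "p \<in> verts (cart_prod (star r) K2)" "q \<in> verts (cart_prod (star r) K2)"
    and eq: "star_zfs r p = star_zfs r q"
  then obtain a e c d where "p = (a, e)" "q = (c, d)" "a \<le> r" "c \<le> r" "e \<le> 1" "d \<le> 1"
    by (cases p, cases q) auto
  moreover have "card (symdiff (star_zfs r p) (star_zfs r q)) = 0"
    using eq by (simp add: symdiff_def)
  ultimately show "p = q"
    using card_symdiff_star_zfs[of a r c e d] by (simp split: if_splits)
qed

lemma graph_iso_TAR_star:
  assumes "r \<ge> 2"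
  shows "graph_iso (TAR (star r)) (cart_prod (star r) K2)"
proof (rule graph_isoI_inverse)
  show "bij_betw (star_zfs r) (verts (cart_prod (star r) K2)) (verts (TAR (star r)))"
    using inj_on_star_zfs Collect_is_zfs_star[OF assms] by (simp add: bij_betw_def)
qed (simp only: adj_TAR card_symdiff_star_zfs_eq_1_iff)

lemma is_zfs_star_obtain_subset_card:
  assumes "r \<ge> 2" "is_zfs (star r) S"
  obtains T where "T \<subseteq> S" "is_zfs (star r) T" "card T = r - 1"
proof -
  obtain a e where a: "a \<le> r" "e \<le> 1" "S = star_zfs r (a, e)"
    using assms(2) by (rule is_zfs_starE)
  define a' where "a' = (if a = 0 then 1 else a)"
  have a': "a' \<le> r" "a' \<noteq> 0"
    using a(1) assms(1) by (auto simp: a'_def)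
  have "star_zfs r (a', 0) \<subseteq> S"
    using a(3) by (auto simp: star_zfs_def a'_def)
  moreover have "is_zfs (star r) (star_zfs r (a', 0))"
    using assms(1) a'(1) by (rule is_zfs_star_zfs) simp
  moreover have "card (star_zfs r (a', 0)) = r - 1"
    using a' by (simp add: card_star_zfs)
  ultimately show ?thesis
    by (rule that)
qed

lemma card_zfs_star_ge:
  assumes "r \<ge> 2" "is_zfs (star r) S"
  shows "card S \<ge> r - 1"
proof -
  obtain a e where "a \<le> r" "e \<le> 1" "S = star_zfs r (a, e)"
    using assms(2) by (rule is_zfs_starE)
  then show ?thesis
    using assms(1) by (simp add: card_star_zfs) arith
qed

lemma minimal_zfs_star_iff:
  assumes "r \<ge> 2"
  shows "minimal_zfs (star r) S \<longleftrightarrow> is_zfs (star r) S \<and> card S = r - 1"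
proof
  assume min: "minimal_zfs (star r) S"
  then have "is_zfs (star r) S"
    by (simp add: minimal_zfs_def)
  moreover obtain T where "T \<subseteq> S" "is_zfs (star r) T" "card T = r - 1"
    using assms calculation by (rule is_zfs_star_obtain_subset_card)
  ultimately show "is_zfs (star r) S \<and> card S = r - 1"
    using min by (auto simp: minimal_zfs_def psubset_eq)
next
  assume S: "is_zfs (star r) S \<and> card S = r - 1"
  have "finite S"
    using S by (auto simp: is_zfs_def intro: finite_subset)
  have "\<not> is_zfs (star r) T" if "T \<subset> S" for T
  proof
    assume "is_zfs (star r) T"
    then have "r - 1 \<le> card T"
      by (rule card_zfs_star_ge[OF assms])
    moreover have "card T < card S"
      using \<open>finite S\<close> that by (rule psubset_card_mono)
    ultimately show False
      using S by simp
  qed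
  then show "minimal_zfs (star r) S"
    using S by (simp add: minimal_zfs_def)
qed

lemma Z_star: "r \<ge> 2 \<Longrightarrow> Z (star r) = r - 1"
  using Z_eqI[of "star r" "star_zfs r (1, 0)"] is_zfs_star_zfs[of r 1 0]
    card_star_zfs[of 1 r 0] card_zfs_star_ge
  by simp

lemma Zbar_star: "r \<ge> 2 \<Longrightarrow> Zbar (star r) = r - 1"
  using Zbar_eqI[of "star r" "star_zfs r (1, 0)"] is_zfs_star_zfs[of r 1 0]
    card_star_zfs[of 1 r 0] minimal_zfs_star_iff
  by simp

lemma connected_TAR_k_star:
  assumes "r \<ge> 2" "r \<le> k"
  shows "connected_graph (TAR_k (star r) k)"
proof -
  let ?G = "TAR_k (star r) k"
  let ?R = "\<lambda>S T. S \<in> verts ?G \<and> T \<in> verts ?G \<and> adj ?G S T"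
  have vert: "star_zfs r (a, e) \<in> verts ?G" if "a \<le> r" "e \<le> 1" "a \<noteq> 0 \<or> e = 0" for a e
    using that assms is_zfs_star_zfs[of r a e] by (auto simp: card_star_zfs)
  have edge: "?R (star_zfs r p) (star_zfs r q)"
    if "star_zfs r p \<in> verts ?G" "star_zfs r q \<in> verts ?G" "p \<in> verts (cart_prod (star r) K2)"
      "q \<in> verts (cart_prod (star r) K2)" "adj (cart_prod (star r) K2) p q" for p q
    using that card_symdiff_star_zfs_eq_1_iff[of p r q] by simp
  show ?thesis
  proof (rule connected_graphI_hub)
    show "star_zfs r (0, 0) \<in> verts ?G"
      by (rule vert) simp_all
    show "adj ?G T S" if "adj ?G S T" for S T
      using that by (simp add: symdiff_def Un_commute)
    fix S
    assume S: "S \<in> verts ?G"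
    then obtain a e where a: "a \<le> r" "e \<le> 1" "S = star_zfs r (a, e)"
      by (auto elim: is_zfs_starE)
    have to_hub: "?R\<^sup>*\<^sup>* (star_zfs r (a, 0)) (star_zfs r (0, 0))"
    proof (cases "a = 0")
      case False
      then show ?thesis
        using edge[OF vert vert, of a 0 0 0] a(1) by auto
    qed simp
    show "?R\<^sup>*\<^sup>* S (star_zfs r (0, 0))"
    proof (cases "e = 0")
      case False
      then have "?R S (star_zfs r (a, 0))"
        using edge[OF _ vert, of "(a, e)" a 0] S a by auto
      then show ?thesis
        using to_hub by (rule converse_rtranclp_into_rtranclp)
    qed (use a to_hub in simp)
  qed
qed

lemma is_zfs_star_card_lessE:
  assumes "r \<ge> 2" "is_zfs (star r) S" "card S < r"
  obtains a where "0 < a" "a \<le> r" "S = star_zfs r (a, 0)"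
proof -
  obtain a e where a: "a \<le> r" "e \<le> 1" "S = star_zfs r (a, e)"
    using assms(2) by (rule is_zfs_starE)
  have "a \<noteq> 0" "e = 0"
    using a assms(3) by (auto simp: card_star_zfs split: if_splits)
  with a show ?thesis
    by (intro that[of a]) simp_all
qed

lemma not_connected_TAR_k_star:
  assumes "r \<ge> 2" "k < r"
  shows "\<not> connected_graph (TAR_k (star r) k)"
proof (cases "verts (TAR_k (star r) k) = {}")
  case True
  then show ?thesis
    by (simp add: connected_graph_def)
next
  case False
  let ?G = "TAR_k (star r) k"
  have no_edge: "\<not> adj ?G S T" if "S \<in> verts ?G" "T \<in> verts ?G" for S T
  proof -
    have "is_zfs (star r) S" "card S < r" "is_zfs (star r) T" "card T < r"
      using that assms(2) by auto
    obtain a where "0 < a" "a \<le> r" "S = star_zfs r (a, 0)"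
      using assms(1) \<open>is_zfs (star r) S\<close> \<open>card S < r\<close> by (rule is_zfs_star_card_lessE)
    moreover obtain c where "0 < c" "c \<le> r" "T = star_zfs r (c, 0)"
      using assms(1) \<open>is_zfs (star r) T\<close> \<open>card T < r\<close> by (rule is_zfs_star_card_lessE)
    ultimately show ?thesis
      using card_symdiff_star_zfs[of a r c 0 0] by simp
  qed
  from False obtain S where "S \<in> verts ?G"
    by blast
  then have "r - 1 \<le> k"
    using card_zfs_star_ge[OF assms(1), of S] by simp
  then have "star_zfs r (a, 0) \<in> verts ?G" if "a \<in> {1, 2}" for a
    using that assms(1) is_zfs_star_zfs[of r a 0] by (auto simp: card_star_zfs)
  moreover have "star_zfs r (1, 0) \<noteq> star_zfs r (2, 0)"
  proof -
    have "2 \<in> star_zfs r (1, 0)" "2 \<notin> star_zfs r (2, 0)"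
      using assms(1) by (simp_all add: star_zfs_def)
    then show ?thesis
      by blast
  qed
  ultimately show ?thesis
    using no_edge
    by (intro not_connected_graphI_no_edges[where x = "star_zfs r (1, 0)" and y = "star_zfs r (2, 0)"])
      simp_all
qed

lemma connected_TAR_k_star_iff:
  "r \<ge> 2 \<Longrightarrow> connected_graph (TAR_k (star r) k) \<longleftrightarrow> r \<le> k"
  using connected_TAR_k_star not_connected_TAR_k_star not_le by blast

theorem proposition1p5:
  fixes r :: nat
  assumes "r \<ge> 2"
  shows "graph_iso (TAR (star r)) (cart_prod (star r) K2)
       \<and> Zbar (star r) = r - 1 \<and> Z (star r) = r - 1
       \<and> z0 (star r) = r \<and> z0_under (star r) = r"
proof (intro conjI)
  show "graph_iso (TAR (star r)) (cart_prod (star r) K2)"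
    using assms by (rule graph_iso_TAR_star)
  show "Zbar (star r) = r - 1" "Z (star r) = r - 1"
    using assms by (simp_all add: Zbar_star Z_star)
  show "z0 (star r) = r"
    unfolding z0_def connected_TAR_k_star_iff[OF assms]
    by (rule Least_equality) auto
  show "z0_under (star r) = r"
    unfolding z0_under_def connected_TAR_k_star_iff[OF assms]
    by (rule Least_equality) simp_all
qed

end
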